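(* Let $K$ be a positive integer, $\tau\in\mathbb H$, and for $u,v\in\mathbb C$ write $z=e^{2\pi i u}$, $y=e^{2\pi i v}$, $q=e^{2\pi i\tau}$. Define the level $K$ Appell-Lerch sum $$A_K(u,v;\tau)=e^{\pi i K u}\sum_{n\in\mathbb Z}\frac{(-1)^{Kn}q^{Kn(n+1)/2}y^n}{1-zq^n},$$ and let $A_1$ denote the case $K=1$, i.e. $A_1(u,v;\tau)=e^{\pi i u}\sum_{n\in\mathbb Z}\frac{(-1)^{n}q^{n(n+1)/2}y^n}{1-zq^n}$. Then, whenever all terms are defined (i.e. no denominator vanishes), $$A_K(u,v;\tau)=\sum_{m=0}^{K-1}e^{2\pi i m u}\,A_1\Big(Ku,\;v+m\tau+\tfrac{K-1}{2};\;K\tau\Big)$$ and $$A_K(u,v;\tau)=K^{-1}e^{\pi i (K-1)u}\sum_{m=0}^{K-1}A_1\Big(u,\;\tfrac{v}{K}+\tfrac{m}{K}+\tau\tfrac{K-1}{2K};\;\tfrac{\tau}{K}\Big).$$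
   Context: The series defining $A_K$ converges for $\tau\in\mathbb H$ and all $v\in\mathbb C$, provided $u\notin\mathbb Z+\mathbb Z\tau$. *)

theory Defs
  imports "HOL-Analysis.Analysis"
begin

text \<open>The powers q^(K n (n+1)/2), y^n, z q^n are written via exp,
  and the bilateral sum over n in Z is an unordered (absolutely convergent) sum.\<close>

definition appell_lerch :: "nat \<Rightarrow> complex \<Rightarrow> complex \<Rightarrow> complex \<Rightarrow> complex" where
  "appell_lerch K u v \<tau> =
     exp (pi * \<i> * of_nat K * u) *
     (\<Sum>\<^sub>\<infinity>n\<in>(UNIV::int set).
        ((-1) powi (int K * n)) * exp (pi * \<i> * \<tau> * of_nat K * of_int n * of_int (n + 1))
          * exp (2 * pi * \<i> * of_int n * v)
          / (1 - exp (2 * pi * \<i> * (u + of_int n * \<tau>))))"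

definition denoms_ok :: "complex \<Rightarrow> complex \<Rightarrow> bool" where
  "denoms_ok u \<tau> \<longleftrightarrow> (\<forall>n::int. exp (2 * pi * \<i> * (u + of_int n * \<tau>)) \<noteq> 1)"

end

theory Submission
  imports Defs
begin

text \<open>Both identities hold term by term before summing over \<open>n\<close>. For the first, the \<open>K\<close> terms
  with parameters \<open>(Ku, v + m\<tau> + (K-1)/2, K\<tau>)\<close> have the common denominator \<open>1 - Z\<^sup>K\<close> with
  \<open>Z = zq\<^sup>n\<close> and numerators proportional to \<open>Z\<^sup>m\<close>, so the finite geometric series
  \<open>\<Sum>\<^sub>m Z\<^sup>m = (1 - Z\<^sup>K)/(1 - Z)\<close> reproduces the level \<open>K\<close> term. For the second, shifting
  \<open>v/K\<close> by \<open>m/K\<close> multiplies the \<open>n\<close>-th term by the \<open>m\<close>-th power of the root of unity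
  \<open>e\<^bsup>2\<pi>in/K\<^esup>\<close>; summing over \<open>m\<close> kills the terms with \<open>K \<nmid> n\<close> and multiplies the others by
  \<open>K\<close>, and reindexing \<open>n = Kj\<close> gives the level \<open>K\<close> sum. Exchanging the finite sum over \<open>m\<close>
  with the sum over \<open>n\<close> is justified by absolute convergence: the numerators decay like
  \<open>e\<^bsup>-cn\<^sup>2\<^esup>\<close>, while \<open>|1 - zq\<^sup>n| \<ge> 1/2\<close> for all but finitely many \<open>n\<close>.\<close>

lemma neg_one_powi_eq_exp: "((-1::complex) powi m) = exp (pi * \<i> * of_int m)"
  using exp_power_int[of "of_real pi * \<i>" m] by (simp add: mult_ac)

lemma summable_on_exp_neg_abs_int: "(\<lambda>n::int. exp (- real_of_int \<bar>n\<bar>)) summable_on UNIV"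
proof -
  have nat: "(\<lambda>n::nat. exp (- real n)) summable_on UNIV"
  proof (rule norm_summable_imp_summable_on)
    have "summable (\<lambda>n. exp (-1::real) ^ n)" by (rule summable_geometric) simp
    thus "summable (\<lambda>n. norm (exp (- real n)))"
      by (simp add: exp_of_nat_mult[symmetric])
  qed
  have pos: "(\<lambda>n::int. exp (- real_of_int \<bar>n\<bar>)) summable_on range int"
    by (subst summable_on_reindex) (use nat in \<open>auto simp: o_def\<close>)
  have neg: "(\<lambda>n::int. exp (- real_of_int \<bar>n\<bar>)) summable_on range (\<lambda>n. - int n)"
    by (subst summable_on_reindex) (use nat in \<open>auto simp: o_def inj_on_def\<close>)
  have "UNIV = range int \<union> range (\<lambda>n. - int n)"
    by auto (metis int_cases2 rangeI)
  thus ?thesis using summable_on_union[OF pos neg] by simp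
qed

text \<open>Completing the square: \<open>-cx\<^sup>2 + (|b|+1)x \<le> (|b|+1)\<^sup>2/(4c)\<close>.\<close>
lemma exp_quadratic_le_exp_neg_abs:
  fixes c b :: real and n :: int
  assumes "c > 0"
  shows "exp (- c * n^2 + b * n) \<le> exp ((\<bar>b\<bar>+1)^2/(4*c)) * exp (- real_of_int \<bar>n\<bar>)"
proof -
  define x where "x = \<bar>real_of_int n\<bar>"
  define B where "B = \<bar>b\<bar> + 1"
  have "0 \<le> (2*c*x - B)^2" by simp
  also have "(2*c*x - B)^2 = B^2 - 4*c*(- c * x^2 + B * x)"
    by (simp add: power2_eq_square algebra_simps)
  finally have "- c * x^2 + B * x \<le> B^2/(4*c)"
    using assms by (subst pos_le_divide_eq) (auto simp: mult_ac)
  moreover have "b * n \<le> (B - 1) * x"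
    unfolding x_def B_def by (metis abs_ge_self abs_mult add_diff_cancel_right')
  moreover have "real_of_int n^2 = x^2" unfolding x_def by simp
  ultimately have "- c * n^2 + b * n \<le> B^2/(4*c) - x"
    by (simp add: algebra_simps)
  hence "- c * n^2 + b * n \<le> (\<bar>b\<bar>+1)^2/(4*c) + (- real_of_int \<bar>n\<bar>)"
    unfolding B_def x_def by simp
  thus ?thesis by (simp add: exp_add[symmetric])
qed

lemma norm_one_minus_exp_ge_half:
  fixes w :: complex
  assumes "\<bar>Re w\<bar> > 1"
  shows "norm (1 - exp w) \<ge> 1/2"
proof -
  have "\<bar>1 - exp (Re w)\<bar> \<ge> 1/2"
  proof (cases "Re w > 1")
    case True
    hence "exp (Re w) \<ge> 2" using exp_ge_add_one_self[of "Re w"] by linarith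
    thus ?thesis by linarith
  next
    case False
    hence "exp (Re w) \<le> exp (-1)" using assms by simp
    also have "exp (-1::real) = 1 / exp 1" by (simp add: exp_minus field_simps)
    also have "\<dots> \<le> 1/2" using exp_ge_add_one_self[of 1] by (simp add: field_simps)
    finally show ?thesis by linarith
  qed
  also have "\<bar>1 - exp (Re w)\<bar> = \<bar>norm (1::complex) - norm (exp w)\<bar>" by simp
  also have "\<dots> \<le> norm (1 - exp w)" by (rule norm_triangle_ineq3)
  finally show ?thesis .
qed

lemma bounded_inverse_one_minus_exp_lattice:
  assumes "Im t > 0"
  obtains B where "\<And>n::int. norm (1 / (1 - exp (2 * pi * \<i> * (u + of_int n * t)))) \<le> B"
proof -
  define D where "D n = norm (1 / (1 - exp (2 * pi * \<i> * (u + of_int n * t))))" for n :: int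
  define S where "S = {n::int. \<bar>Im u + n * Im t\<bar> \<le> 1}"
  define N where "N = ceiling ((1 + \<bar>Im u\<bar>) / Im t)"
  have "S \<subseteq> {-N..N}"
  proof
    fix n assume "n \<in> S"
    hence "\<bar>Im u + n * Im t\<bar> \<le> 1" by (simp add: S_def)
    moreover have "\<bar>n\<bar> * Im t = \<bar>n * Im t\<bar>" using assms by (simp add: abs_mult)
    ultimately have "\<bar>real_of_int n\<bar> \<le> (1 + \<bar>Im u\<bar>) / Im t"
      using assms by (simp add: pos_le_divide_eq)
    hence "\<bar>real_of_int n\<bar> \<le> N" unfolding N_def by linarith
    thus "n \<in> {-N..N}" by auto
  qed
  hence finite_S: "finite S" by (rule finite_subset) simp
  have "D n \<le> 2 + sum D S" for n
  proof (cases "n \<in> S")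
    case True
    hence "D n \<le> sum D S" using finite_S by (intro member_le_sum) (auto simp: D_def)
    thus ?thesis by linarith
  next
    case False
    hence "\<bar>Im u + n * Im t\<bar> > 1" by (simp add: S_def)
    hence "\<bar>Re (2 * pi * \<i> * (u + of_int n * t))\<bar> > 2 * pi" by (simp add: abs_mult)
    hence "\<bar>Re (2 * pi * \<i> * (u + of_int n * t))\<bar> > 1" using pi_gt3 by linarith
    hence "norm (1 - exp (2 * pi * \<i> * (u + of_int n * t))) \<ge> 1/2"
      by (rule norm_one_minus_exp_ge_half)
    hence "D n \<le> 2" unfolding D_def by (simp add: norm_divide divide_le_eq)
    moreover have "sum D S \<ge> 0" by (intro sum_nonneg) (auto simp: D_def)
    ultimately show ?thesis by linarith
  qed
  thus ?thesis using that unfolding D_def by blast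
qed

definition appell_lerch_term :: "nat \<Rightarrow> complex \<Rightarrow> complex \<Rightarrow> complex \<Rightarrow> int \<Rightarrow> complex" where
  "appell_lerch_term K u v \<tau> n = ((-1) powi (int K * n)) * exp (pi * \<i> * \<tau> * of_nat K * of_int n * of_int (n + 1))
          * exp (2 * pi * \<i> * of_int n * v)
          / (1 - exp (2 * pi * \<i> * (u + of_int n * \<tau>)))"

lemma appell_lerch_eq_infsum:
  "appell_lerch K u v \<tau> = exp (pi * \<i> * of_nat K * u) * infsum (appell_lerch_term K u v \<tau>) UNIV"
  unfolding appell_lerch_def appell_lerch_term_def ..

lemma appell_lerch_term_summable:
  assumes "Im \<tau> > 0" "K \<ge> 1"
  shows "appell_lerch_term K u v \<tau> summable_on UNIV"
proof -
  obtain B where B: "\<And>n::int. norm (1 / (1 - exp (2 * pi * \<i> * (u + of_int n * \<tau>)))) \<le> B"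
    using bounded_inverse_one_minus_exp_lattice[OF assms(1)] by blast
  define c where "c = pi * Im \<tau> * K"
  define b where "b = - (pi * Im \<tau> * K + 2 * pi * Im v)"
  define M where "M = exp ((\<bar>b\<bar>+1)^2/(4*c))"
  have c: "c > 0" unfolding c_def using assms by simp
  have B0: "B \<ge> 0" using B[of 0] norm_ge_zero order_trans by blast
  have bound: "norm (appell_lerch_term K u v \<tau> n) \<le> B * M * exp (- real_of_int \<bar>n\<bar>)" for n
  proof -
    have numerator: "norm ((-1::complex) powi (int K * n) * exp (pi * \<i> * \<tau> * of_nat K * of_int n * of_int (n + 1))
          * exp (2 * pi * \<i> * of_int n * v)) = exp (- c * n^2 + b * n)"
      unfolding neg_one_powi_eq_exp
      by (simp add: c_def b_def exp_add[symmetric] power2_eq_square algebra_simps)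
    have "norm (appell_lerch_term K u v \<tau> n)
        = exp (- c * n^2 + b * n) * norm (1 / (1 - exp (2 * pi * \<i> * (u + of_int n * \<tau>))))"
      unfolding appell_lerch_term_def numerator[symmetric] by (simp add: norm_divide)
    also have "\<dots> \<le> exp (- c * n^2 + b * n) * B" by (intro mult_left_mono B) simp
    also have "\<dots> \<le> M * exp (- real_of_int \<bar>n\<bar>) * B"
      unfolding M_def by (intro mult_right_mono exp_quadratic_le_exp_neg_abs c B0)
    finally show ?thesis by (simp add: mult_ac)
  qed
  have "(\<lambda>n. B * M * exp (- real_of_int \<bar>n\<bar>)) summable_on UNIV"
    by (intro summable_on_cmult_right summable_on_exp_neg_abs_int)
  hence "(\<lambda>n. norm (B * M * exp (- real_of_int \<bar>n\<bar>))) summable_on UNIV"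
    using B0 by (simp add: M_def)
  hence "(\<lambda>n. norm (appell_lerch_term K u v \<tau> n)) summable_on UNIV"
    by (rule Infinite_Sum.abs_summable_on_comparison_test')
      (use bound B0 in \<open>simp add: M_def abs_mult\<close>)
  thus ?thesis by (simp add: summable_on_iff_abs_summable_on_complex)
qed

lemma has_sum_sum:
  fixes f :: "'i \<Rightarrow> 'a \<Rightarrow> 'b::topological_comm_monoid_add"
  assumes "finite I" "\<And>i. i \<in> I \<Longrightarrow> (f i has_sum s i) A"
  shows "((\<lambda>x. \<Sum>i\<in>I. f i x) has_sum (\<Sum>i\<in>I. s i)) A"
  using assms by (induction I rule: finite_induct) (auto intro!: has_sum_add)

lemma infsum_sum:
  fixes f :: "'i \<Rightarrow> 'a \<Rightarrow> 'b::{topological_comm_monoid_add, t2_space}"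
  assumes "finite I" "\<And>i. i \<in> I \<Longrightarrow> f i summable_on A"
  shows "infsum (\<lambda>x. \<Sum>i\<in>I. f i x) A = (\<Sum>i\<in>I. infsum (f i) A)"
  using has_sum_sum[OF assms(1), where f=f and s="\<lambda>i. infsum (f i) A" and A=A] assms(2)
  by (simp add: infsumI)

lemma sum_appell_lerch_term_dissection:
  assumes "K \<ge> 1" and "denoms_ok (of_nat K * u) (of_nat K * \<tau>)"
  shows "(\<Sum>m<K. exp (2 * pi * \<i> * of_nat m * u) *
           appell_lerch_term 1 (of_nat K * u) (v + of_nat m * \<tau> + (of_nat K - 1) / 2) (of_nat K * \<tau>) n)
         = appell_lerch_term K u v \<tau> n"
proof -
  define Z where "Z = exp (2 * pi * \<i> * (u + of_int n * \<tau>))"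
  define N where "N = exp (pi * \<i> * of_int (int K * n)) * exp (pi * \<i> * \<tau> * of_nat K * of_int n * of_int (n + 1))
          * exp (2 * pi * \<i> * of_int n * v)"
  have ZK: "exp (2 * pi * \<i> * (of_nat K * u + of_int n * (of_nat K * \<tau>))) = Z ^ K"
    unfolding Z_def exp_of_nat_mult[symmetric] by (simp add: algebra_simps)
  have "Z ^ K \<noteq> 1" using assms(2) ZK unfolding denoms_ok_def by metis
  hence "Z \<noteq> 1" by auto
  have summand: "exp (2 * pi * \<i> * of_nat m * u) *
           appell_lerch_term 1 (of_nat K * u) (v + of_nat m * \<tau> + (of_nat K - 1) / 2) (of_nat K * \<tau>) n
        = N * Z ^ m / (1 - Z ^ K)" for m
  proof -
    have "exp (2 * pi * \<i> * of_nat m * u) * (exp (pi * \<i> * of_int (int 1 * n)) *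
           exp (pi * \<i> * (of_nat K * \<tau>) * of_nat 1 * of_int n * of_int (n + 1)) *
           exp (2 * pi * \<i> * of_int n * (v + of_nat m * \<tau> + (of_nat K - 1) / 2)))
        = N * Z ^ m"
      unfolding N_def Z_def exp_of_nat_mult[symmetric] exp_add[symmetric]
      by (rule arg_cong[where f = exp]) (simp add: field_simps)
    thus ?thesis unfolding appell_lerch_term_def neg_one_powi_eq_exp ZK by (simp add: mult_ac)
  qed
  have "(\<Sum>m<K. exp (2 * pi * \<i> * of_nat m * u) *
           appell_lerch_term 1 (of_nat K * u) (v + of_nat m * \<tau> + (of_nat K - 1) / 2) (of_nat K * \<tau>) n)
      = N / (1 - Z ^ K) * (\<Sum>m<K. Z ^ m)"
    unfolding summand by (simp add: sum_distrib_left sum_divide_distrib mult_ac)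
  also have "\<dots> = N / (1 - Z)" using \<open>Z \<noteq> 1\<close> \<open>Z ^ K \<noteq> 1\<close> by (simp add: sum_gp_strict)
  also have "\<dots> = appell_lerch_term K u v \<tau> n"
    unfolding appell_lerch_term_def N_def Z_def neg_one_powi_eq_exp by simp
  finally show ?thesis .
qed

lemma sum_powers_root_of_unity:
  assumes "K \<ge> 1"
  shows "(\<Sum>m<K. exp (2 * pi * \<i> * of_int n / of_nat K) ^ m) = (if int K dvd n then of_nat K else 0)"
proof -
  define w where "w = exp (2 * pi * \<i> * of_int n / of_nat K)"
  have "w = 1 \<longleftrightarrow> int K dvd n"
  proof
    assume "w = 1"
    then obtain j :: int where "Im (2 * pi * \<i> * of_int n / of_nat K) = of_int (2 * j) * pi"
      unfolding w_def exp_eq_1 by blast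
    hence "real_of_int n = real K * j" using assms by (simp add: field_simps)
    thus "int K dvd n" by (metis dvd_triv_left of_int_eq_iff of_int_mult of_int_of_nat_eq)
  next
    assume "int K dvd n"
    then obtain j where "n = int K * j" by blast
    hence "w = exp (\<i> * (of_int j * (of_real pi * 2)))"
      unfolding w_def using assms by (simp add: field_simps)
    thus "w = 1" by simp
  qed
  moreover have "w ^ K = exp (\<i> * (of_int n * (of_real pi * 2)))"
    unfolding w_def exp_of_nat_mult[symmetric] using assms by (simp add: field_simps)
  ultimately show ?thesis unfolding w_def[symmetric] by (simp add: sum_gp_strict)
qed

lemma sum_appell_lerch_term_roots_of_unity:
  assumes "K \<ge> 1"
  shows "(\<Sum>m<K. appell_lerch_term 1 u (v / of_nat K + of_nat m / of_nat K + \<tau> * (of_nat K - 1) / (2 * of_nat K))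
                  (\<tau> / of_nat K) n)
         = (if int K dvd n then of_nat K * appell_lerch_term K u v \<tau> (n div int K) else 0)"
proof -
  have K0: "(of_nat K :: complex) \<noteq> 0" using assms by simp
  define w where "w = exp (2 * pi * \<i> * of_int n / of_nat K)"
  define P where "P = exp (pi * \<i> * of_int n) * exp (pi * \<i> * (\<tau> / of_nat K) * of_int n * of_int (n + 1))
     * exp (2 * pi * \<i> * of_int n * (v / of_nat K + \<tau> * (of_nat K - 1) / (2 * of_nat K)))"
  define D where "D = 1 - exp (2 * pi * \<i> * (u + of_int n * (\<tau> / of_nat K)))"
  have summand: "appell_lerch_term 1 u (v / of_nat K + of_nat m / of_nat K + \<tau> * (of_nat K - 1) / (2 * of_nat K))
                (\<tau> / of_nat K) n = P * w ^ m / D" for m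
  proof -
    have "exp (pi * \<i> * of_int (int 1 * n)) * exp (pi * \<i> * (\<tau> / of_nat K) * of_nat 1 * of_int n * of_int (n + 1)) *
           exp (2 * pi * \<i> * of_int n * (v / of_nat K + of_nat m / of_nat K + \<tau> * (of_nat K - 1) / (2 * of_nat K)))
        = P * w ^ m"
      unfolding P_def w_def exp_of_nat_mult[symmetric] exp_add[symmetric]
      by (rule arg_cong[where f = exp]) (simp add: field_simps K0)
    thus ?thesis unfolding appell_lerch_term_def neg_one_powi_eq_exp D_def by (simp add: mult_ac)
  qed
  have level_K: "P / D = appell_lerch_term K u v \<tau> j" if "n = int K * j" for j
  proof -
    have "P = exp (pi * \<i> * of_int (int K * j)) * exp (pi * \<i> * \<tau> * of_nat K * of_int j * of_int (j + 1))
        * exp (2 * pi * \<i> * of_int j * v)"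
      unfolding P_def that exp_add[symmetric]
      by (rule arg_cong[where f = exp]) (use assms in \<open>simp add: field_simps\<close>)
    moreover have "D = 1 - exp (2 * pi * \<i> * (u + of_int j * \<tau>))"
      unfolding D_def that using K0 by (simp add: field_simps)
    ultimately show ?thesis unfolding appell_lerch_term_def neg_one_powi_eq_exp by simp
  qed
  have "(\<Sum>m<K. appell_lerch_term 1 u (v / of_nat K + of_nat m / of_nat K + \<tau> * (of_nat K - 1) / (2 * of_nat K))
                  (\<tau> / of_nat K) n) = P / D * (\<Sum>m<K. w ^ m)"
    unfolding summand by (simp add: sum_distrib_left sum_divide_distrib mult_ac)
  also have "\<dots> = (if int K dvd n then of_nat K * appell_lerch_term K u v \<tau> (n div int K) else 0)"
  proof (cases "int K dvd n")
    case True
    hence "P / D = appell_lerch_term K u v \<tau> (n div int K)" by (intro level_K) simp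
    thus ?thesis unfolding w_def sum_powers_root_of_unity[OF assms] using True by simp
  next
    case False
    thus ?thesis unfolding w_def sum_powers_root_of_unity[OF assms] by simp
  qed
  finally show ?thesis .
qed

lemma appell_lerch_dissection:
  assumes K: "K \<ge> 1" and "Im \<tau> > 0" and d: "denoms_ok (of_nat K * u) (of_nat K * \<tau>)"
  shows "appell_lerch K u v \<tau> =
           (\<Sum>m<K. exp (2 * pi * \<i> * of_nat m * u) *
              appell_lerch 1 (of_nat K * u)
                (v + of_nat m * \<tau> + (of_nat K - 1) / 2) (of_nat K * \<tau>))"
proof -
  define G where "G m n = exp (2 * pi * \<i> * of_nat m * u) *
           appell_lerch_term 1 (of_nat K * u) (v + of_nat m * \<tau> + (of_nat K - 1) / 2) (of_nat K * \<tau>) n" for m n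
  have "Im (of_nat K * \<tau>) > 0" using assms by simp
  hence summable: "G m summable_on UNIV" for m
    unfolding G_def by (intro summable_on_cmult_right appell_lerch_term_summable) simp_all
  have "(\<Sum>m<K. exp (2 * pi * \<i> * of_nat m * u) *
              appell_lerch 1 (of_nat K * u) (v + of_nat m * \<tau> + (of_nat K - 1) / 2) (of_nat K * \<tau>))
      = exp (pi * \<i> * of_nat K * u) * (\<Sum>m<K. infsum (G m) UNIV)"
    unfolding appell_lerch_eq_infsum G_def infsum_cmult_right' by (simp add: sum_distrib_left mult_ac)
  also have "(\<Sum>m<K. infsum (G m) UNIV) = infsum (\<lambda>n. \<Sum>m<K. G m n) UNIV"
    by (rule infsum_sum[symmetric]) (auto intro: summable)
  also have "\<dots> = infsum (appell_lerch_term K u v \<tau>) UNIV"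
    unfolding G_def sum_appell_lerch_term_dissection[OF K d] ..
  finally show ?thesis unfolding appell_lerch_eq_infsum by simp
qed

text \<open>Unlike the dissection, this identity needs no hypothesis on the denominators: a vanishing
  denominator contributes a zero term on both sides.\<close>
lemma appell_lerch_eq_sum_roots_of_unity:
  assumes K: "K \<ge> 1" and "Im \<tau> > 0"
  shows "appell_lerch K u v \<tau> =
           inverse (of_nat K) * exp (pi * \<i> * (of_nat K - 1) * u) *
           (\<Sum>m<K. appell_lerch 1 u
               (v / of_nat K + of_nat m / of_nat K + \<tau> * (of_nat K - 1) / (2 * of_nat K))
               (\<tau> / of_nat K))"
proof -
  have K0: "(of_nat K :: complex) \<noteq> 0" using K by simp
  define G where "G m = appell_lerch_term 1 u (v / of_nat K + of_nat m / of_nat K + \<tau> * (of_nat K - 1) / (2 * of_nat K))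
                          (\<tau> / of_nat K)" for m
  define H where "H n = (if int K dvd n then of_nat K * appell_lerch_term K u v \<tau> (n div int K) else 0)" for n
  have "Im (\<tau> / of_nat K) > 0" using assms by (simp add: Im_divide_of_nat)
  hence summable: "G m summable_on UNIV" for m
    unfolding G_def by (intro appell_lerch_term_summable) simp_all
  have "(\<Sum>m<K. appell_lerch 1 u
               (v / of_nat K + of_nat m / of_nat K + \<tau> * (of_nat K - 1) / (2 * of_nat K)) (\<tau> / of_nat K))
      = exp (pi * \<i> * u) * (\<Sum>m<K. infsum (G m) UNIV)"
    unfolding appell_lerch_eq_infsum G_def by (simp add: sum_distrib_left)
  also have "(\<Sum>m<K. infsum (G m) UNIV) = infsum (\<lambda>n. \<Sum>m<K. G m n) UNIV"
    by (rule infsum_sum[symmetric]) (auto intro: summable)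
  also have "\<dots> = infsum H UNIV"
    unfolding G_def H_def sum_appell_lerch_term_roots_of_unity[OF K] ..
  also have "\<dots> = infsum H (range (\<lambda>j. int K * j))"
    by (rule infsum_cong_neutral) (auto simp: H_def)
  also have "\<dots> = infsum (H \<circ> (\<lambda>j. int K * j)) UNIV"
    by (rule infsum_reindex) (use K in \<open>auto simp: inj_on_def\<close>)
  also have "\<dots> = of_nat K * infsum (appell_lerch_term K u v \<tau>) UNIV"
    using K by (simp add: H_def o_def infsum_cmult_right')
  finally have sum_eq: "(\<Sum>m<K. appell_lerch 1 u
               (v / of_nat K + of_nat m / of_nat K + \<tau> * (of_nat K - 1) / (2 * of_nat K)) (\<tau> / of_nat K))
      = exp (pi * \<i> * u) * (of_nat K * infsum (appell_lerch_term K u v \<tau>) UNIV)" .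
  have exp_sum: "exp (pi * \<i> * (of_nat K - 1) * u) * exp (pi * \<i> * u) = exp (pi * \<i> * of_nat K * u)"
    unfolding exp_add[symmetric] by (rule arg_cong[where f = exp]) (simp add: algebra_simps)
  have cancel: "inverse (of_nat K) * a * (b * (of_nat K * S)) = (a * b) * S" for a b S :: complex
    using K0 by (simp add: field_simps)
  show ?thesis unfolding sum_eq cancel exp_sum by (rule appell_lerch_eq_infsum)
qed

theorem mainTheorem1:
  fixes K :: nat and u v \<tau> :: complex
  assumes "K \<ge> 1" and "Im \<tau> > 0" and "denoms_ok u \<tau>"
  shows "(denoms_ok (of_nat K * u) (of_nat K * \<tau>) \<longrightarrow>
           appell_lerch K u v \<tau> =
           (\<Sum>m<K. exp (2 * pi * \<i> * of_nat m * u) *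
              appell_lerch 1 (of_nat K * u)
                (v + of_nat m * \<tau> + (of_nat K - 1) / 2) (of_nat K * \<tau>)))
       \<and> (denoms_ok u (\<tau> / of_nat K) \<longrightarrow>
           appell_lerch K u v \<tau> =
           inverse (of_nat K) * exp (pi * \<i> * (of_nat K - 1) * u) *
           (\<Sum>m<K. appell_lerch 1 u
               (v / of_nat K + of_nat m / of_nat K + \<tau> * (of_nat K - 1) / (2 * of_nat K))
               (\<tau> / of_nat K)))"
  using appell_lerch_dissection[OF assms(1,2)] appell_lerch_eq_sum_roots_of_unity[OF assms(1,2)]
  by blast

end
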